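(* Let $w=w_1\cdots w_n$ be a strict pin word and $(p_1,\dots,p_n)$, together with its origin $p_0$, the pin sequence encoded by $w$. For $i\ge2$ define $q(w_{i-1},w_i)=\phi^{-1}(w_{i-1}w_i)$ if $i\ge3$, and $q(w_1,w_2)=\phi^{-1}(BC)$ where $\phi(w_1w_2)=ABC$. Then for every $i\ge2$, $q(w_{i-1},w_i)$ is a numeral, and $p_i$ lies in quadrant $q(w_{i-1},w_i)$ with respect to $\{p_0,\dots,p_{i-2}\}$.
   Context: Pins are points of $\mathbb{Z}^2$. A pin $p$ separates a set $P$ from a set $Q$ horizontally (resp. vertically) if the horizontal (resp. vertical) line through $p$ has $P$ strictly on one side and $Q$ strictly on the other. A pin sequence is a sequence $(p_1,\dots,p_k)$ of pins, no two in a common row or column, such that for every $i\ge2$, $p_i$ lies outside the bounding box of $\{p_1,\dots,p_{i-1}\}$ and either $p_i$ separates $p_{i-1}$ from $\{p_1,\dots,p_{i-2}\}$ or $p_i$ is independent from $\{p_1,\dots,p_{i-1}\}$ (does not separate it into two nonempty sets). Pin words: given a pin sequence $(p_1,\dots,p_n)$ and an origin $p_0$ such that $(p_0,\dots,p_n)$ is a pin sequence, each $p_i$ ($i\ge1$) is encoded by $U$ (resp. $D,L,R$) if $p_i$ separates $p_{i-1}$ from $\{p_0,\dots,p_{i-2}\}$ and lies above (resp. below, left of, right of) the bounding box of $\{p_0,\dots,p_{i-1}\}$, and by $1$ (resp. $2,3,4$) if $p_i$ is independent from $\{p_0,\dots,p_{i-1}\}$ and lies in the up-right (resp. up-left, bottom-left,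 bottom-right) corner region of that bounding box. Letters $1,2,3,4$ are numerals, $U,D,L,R$ directions. A strict pin word is a pin word of length $\ge2$ whose first letter is a numeral and all others directions; it determines its pin sequence $(p_0,\dots,p_n)$ up to order isomorphism. A point $x$ lies in quadrant $1$ (resp. $2,3,4$) with respect to a finite set $S$ of points if its abscissa is larger (resp. smaller, smaller, larger) than all abscissas in $S$ and its ordinate is larger (resp. larger, smaller, smaller) than all ordinates in $S$. For a strict pin word $u=u'u''$ with $|u'|=2$, $\phi(u)=\varphi(u')u''$ with $\varphi$: $1R\mapsto RUR$, $2R\mapsto LUR$, $3R\mapsto LDR$, $4R\mapsto RDR$, $1L\mapsto RUL$, $2L\mapsto LUL$, $3L\mapsto LDL$, $4L\mapsto RDL$, $1U\mapsto URU$, $2U\mapsto ULU$, $3U\mapsto DLU$, $4U\mapsto DRU$, $1D\mapsto URD$, $2D\mapsto ULD$, $3D\mapsto DLD$, $4D\mapsto DRD$. On two-letter words of directions, $\phi^{-1}$ is defined by $\phi^{-1}(UR)=\phi^{-1}(RU)=1$, $\phi^{-1}(UL)=\phi^{-1}(LU)=2$, $\phi^{-1}(DL)=\phi^{-1}(LD)=3$, $\phi^{-1}(RD)=\phi^{-1}(DR)=4$. *)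

theory Defs
  imports Main
begin

text \<open>Pins are points of Z^2, represented as pairs (abscissa, ordinate).\<close>
type_synonym pin = "int \<times> int"

datatype letter = N1 | N2 | N3 | N4 | U | D | L | R

fun is_numeral :: "letter \<Rightarrow> bool" where
  "is_numeral N1 = True" | "is_numeral N2 = True" | "is_numeral N3 = True"
| "is_numeral N4 = True" | "is_numeral _ = False"

fun is_direction :: "letter \<Rightarrow> bool" where
  "is_direction U = True" | "is_direction D = True" | "is_direction L = True"
| "is_direction R = True" | "is_direction _ = False"

definition sep_horiz :: "pin \<Rightarrow> pin set \<Rightarrow> pin set \<Rightarrow> bool" where
  "sep_horiz p P Q \<longleftrightarrow>
     ((\<forall>a\<in>P. snd a < snd p) \<and> (\<forall>b\<in>Q. snd p < snd b)) \<or>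
     ((\<forall>a\<in>P. snd p < snd a) \<and> (\<forall>b\<in>Q. snd b < snd p))"

definition sep_vert :: "pin \<Rightarrow> pin set \<Rightarrow> pin set \<Rightarrow> bool" where
  "sep_vert p P Q \<longleftrightarrow>
     ((\<forall>a\<in>P. fst a < fst p) \<and> (\<forall>b\<in>Q. fst p < fst b)) \<or>
     ((\<forall>a\<in>P. fst p < fst a) \<and> (\<forall>b\<in>Q. fst b < fst p))"

definition separates :: "pin \<Rightarrow> pin set \<Rightarrow> pin set \<Rightarrow> bool" where
  "separates p P Q \<longleftrightarrow> sep_horiz p P Q \<or> sep_vert p P Q"

definition independent :: "pin \<Rightarrow> pin set \<Rightarrow> bool" where
  "independent p S \<longleftrightarrow>
     \<not> (\<exists>P Q. P \<noteq> {} \<and> Q \<noteq> {} \<and> P \<union> Q = S \<and> separates p P Q)"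

definition in_bbox :: "pin \<Rightarrow> pin set \<Rightarrow> bool" where
  "in_bbox p S \<longleftrightarrow>
     (\<exists>a\<in>S. fst a \<le> fst p) \<and> (\<exists>a\<in>S. fst p \<le> fst a) \<and>
     (\<exists>a\<in>S. snd a \<le> snd p) \<and> (\<exists>a\<in>S. snd p \<le> snd a)"

text \<open>Pin sequence (p_0,...,p_{k-1}) as a list, 0-indexed.\<close>
definition pin_sequence :: "pin list \<Rightarrow> bool" where
  "pin_sequence ps \<longleftrightarrow>
     (\<forall>i<length ps. \<forall>j<length ps. i \<noteq> j \<longrightarrow>
         fst (ps!i) \<noteq> fst (ps!j) \<and> snd (ps!i) \<noteq> snd (ps!j)) \<and>
     (\<forall>i. 1 \<le> i \<and> i < length ps \<longrightarrow>
         \<not> in_bbox (ps!i) (set (take i ps)) \<and>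
         (separates (ps!i) {ps!(i-1)} (set (take (i-1) ps)) \<or>
          independent (ps!i) (set (take i ps))))"

fun in_quadrant :: "letter \<Rightarrow> pin \<Rightarrow> pin set \<Rightarrow> bool" where
  "in_quadrant N1 x S = (\<forall>s\<in>S. fst s < fst x \<and> snd s < snd x)"
| "in_quadrant N2 x S = (\<forall>s\<in>S. fst x < fst s \<and> snd s < snd x)"
| "in_quadrant N3 x S = (\<forall>s\<in>S. fst x < fst s \<and> snd x < snd s)"
| "in_quadrant N4 x S = (\<forall>s\<in>S. fst s < fst x \<and> snd x < snd s)"
| "in_quadrant _ x S = False"

definition letter_encodes :: "letter \<Rightarrow> pin list \<Rightarrow> nat \<Rightarrow> bool" where
  "letter_encodes c ps i \<longleftrightarrow>
    (let p = ps!i; S = set (take i ps); sep = separates p {ps!(i-1)} (set (take (i-1) ps)) in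
     (case c of
        U \<Rightarrow> sep \<and> (\<forall>s\<in>S. snd s < snd p)
      | D \<Rightarrow> sep \<and> (\<forall>s\<in>S. snd p < snd s)
      | L \<Rightarrow> sep \<and> (\<forall>s\<in>S. fst p < fst s)
      | R \<Rightarrow> sep \<and> (\<forall>s\<in>S. fst s < fst p)
      | N1 \<Rightarrow> independent p S \<and> in_quadrant N1 p S
      | N2 \<Rightarrow> independent p S \<and> in_quadrant N2 p S
      | N3 \<Rightarrow> independent p S \<and> in_quadrant N3 p S
      | N4 \<Rightarrow> independent p S \<and> in_quadrant N4 p S))"

definition encodes :: "letter list \<Rightarrow> pin list \<Rightarrow> bool" where
  "encodes w ps \<longleftrightarrow> length ps = length w + 1 \<and> pin_sequence ps \<and>
     (\<forall>i<length w. letter_encodes (w!i) ps (i+1))"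

definition strict_pin_word :: "letter list \<Rightarrow> bool" where
  "strict_pin_word w \<longleftrightarrow> length w \<ge> 2 \<and> is_numeral (w!0) \<and>
     (\<forall>i. 1 \<le> i \<and> i < length w \<longrightarrow> is_direction (w!i))"

fun varphi :: "letter \<Rightarrow> letter \<Rightarrow> (letter \<times> letter \<times> letter) option" where
  "varphi N1 R = Some (R,U,R)" | "varphi N2 R = Some (L,U,R)"
| "varphi N3 R = Some (L,D,R)" | "varphi N4 R = Some (R,D,R)"
| "varphi N1 L = Some (R,U,L)" | "varphi N2 L = Some (L,U,L)"
| "varphi N3 L = Some (L,D,L)" | "varphi N4 L = Some (R,D,L)"
| "varphi N1 U = Some (U,R,U)" | "varphi N2 U = Some (U,L,U)"
| "varphi N3 U = Some (D,L,U)" | "varphi N4 U = Some (D,R,U)"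
| "varphi N1 D = Some (U,R,D)" | "varphi N2 D = Some (U,L,D)"
| "varphi N3 D = Some (D,L,D)" | "varphi N4 D = Some (D,R,D)"
| "varphi _ _ = None"

fun phi_inv :: "letter \<Rightarrow> letter \<Rightarrow> letter option" where
  "phi_inv U R = Some N1" | "phi_inv R U = Some N1"
| "phi_inv U L = Some N2" | "phi_inv L U = Some N2"
| "phi_inv D L = Some N3" | "phi_inv L D = Some N3"
| "phi_inv R D = Some N4" | "phi_inv D R = Some N4"
| "phi_inv _ _ = None"

text \<open>q(w_{i-1}, w_i) for 2 \<le> i \<le> n (1-indexed), where w is 0-indexed as a list.\<close>
definition q :: "letter list \<Rightarrow> nat \<Rightarrow> letter option" where
  "q w i = (if i \<ge> 3 then phi_inv (w!(i-2)) (w!(i-1))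
            else (case varphi (w!0) (w!1) of
                    Some (A, B, C) \<Rightarrow> phi_inv B C
                  | None \<Rightarrow> None))"

end

theory Submission
  imports Defs
begin

text \<open>A pin lying outside the bounding box of the earlier pins on side d can separate the
  previous pin from the others only by its line parallel to d. If the previous pin lies beyond the
  others on a side perpendicular to d, that line passes between them, so the new pin lies beyond the
  others on that side as well. For i \<ge> 3, p_{i-1} lies on side w_{i-1} and p_i on side w_i; these
  sides cannot be parallel, since two nested separations by parallel lines are impossible, so p_i lies
  on both sides of {p_0, ..., p_{i-2}}, i.e. in quadrant \<phi>^{-1}(w_{i-1} w_i). For i = 2 the inherited
  side is the side of the quadrant w_1 of p_1 perpendicular to w_2, the middle letter of \<phi>(w_1 w_2).\<close>

fun beyond :: "letter \<Rightarrow> pin \<Rightarrow> pin set \<Rightarrow> bool" where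
  "beyond U x S = (\<forall>s\<in>S. snd s < snd x)"
| "beyond D x S = (\<forall>s\<in>S. snd x < snd s)"
| "beyond L x S = (\<forall>s\<in>S. fst x < fst s)"
| "beyond R x S = (\<forall>s\<in>S. fst s < fst x)"
| "beyond _ x S = False"

fun separates_along :: "letter \<Rightarrow> pin \<Rightarrow> pin set \<Rightarrow> pin set \<Rightarrow> bool" where
  "separates_along U = sep_vert"
| "separates_along D = sep_vert"
| "separates_along L = sep_horiz"
| "separates_along R = sep_horiz"
| "separates_along _ = (\<lambda>_ _ _. False)"

lemma beyond_subset: "S \<subseteq> T \<Longrightarrow> beyond d x T \<Longrightarrow> beyond d x S"
  by (cases d) auto

lemma beyond_vertical_not_sep_horiz:
  assumes "beyond d x (P \<union> Q)" "d = U \<or> d = D" "a \<in> P" "b \<in> Q"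
  shows "\<not> sep_horiz x P Q"
  using assms unfolding sep_horiz_def by (metis UnI1 UnI2 beyond.simps(1,2) less_asym)

lemma beyond_horizontal_not_sep_vert:
  assumes "beyond d x (P \<union> Q)" "d = L \<or> d = R" "a \<in> P" "b \<in> Q"
  shows "\<not> sep_vert x P Q"
  using assms unfolding sep_vert_def by (metis UnI1 UnI2 beyond.simps(3,4) less_asym)

lemma beyond_separates_along:
  assumes "is_direction d" "beyond d x (P \<union> Q)" "P \<noteq> {}" "Q \<noteq> {}" "separates x P Q"
  shows "separates_along d x P Q"
proof -
  obtain a b where ab: "a \<in> P" "b \<in> Q" using assms(3,4) by blast
  show ?thesis
    using assms(1,5) beyond_vertical_not_sep_horiz[OF assms(2) _ ab]
      beyond_horizontal_not_sep_vert[OF assms(2) _ ab]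
    by (cases d) (auto simp: separates_def)
qed

lemma separates_along_parallel:
  assumes "is_direction d1" "is_direction d2" "phi_inv d1 d2 = None"
  shows "separates_along d1 = separates_along d2"
  using assms by (cases d1; cases d2) auto

lemma separates_along_nested_False:
  assumes "separates_along d y {z} Q" "separates_along d x {y} (insert z Q)" "Q \<noteq> {}"
  shows False
proof -
  obtain a where "a \<in> Q" using assms(3) by blast
  then show False
    using assms(1,2) by (cases d) (simp_all add: sep_horiz_def sep_vert_def; meson less_asym less_trans)+
qed

lemma separates_along_beyond:
  assumes "phi_inv d1 d2 \<noteq> None" "separates_along d2 x {y} S" "beyond d1 y S"
  shows "beyond d1 x S"
  using assms by (cases d1; cases d2; simp add: sep_horiz_def sep_vert_def; meson less_trans)

lemma phi_inv_is_numeral: "phi_inv a b = Some k \<Longrightarrow> is_numeral k"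
  by (induction a b rule: phi_inv.induct) auto

lemma in_quadrant_phi_inv:
  "phi_inv d1 d2 = Some k \<Longrightarrow> in_quadrant k x S \<longleftrightarrow> beyond d1 x S \<and> beyond d2 x S"
  by (cases d1; cases d2) auto

lemma varphi_middle_side:
  assumes "is_numeral k" "is_direction d"
  obtains A B where "varphi k d = Some (A, B, d)" "phi_inv B d \<noteq> None"
    "\<And>x S. in_quadrant k x S \<Longrightarrow> beyond B x S"
  using assms by (cases k; cases d) auto

lemma quadrant_of_two_sides:
  assumes "is_direction d1" "is_direction d2" "Q \<noteq> {}"
    and "beyond d1 y (insert z Q)" "separates y {z} Q"
    and "beyond d2 x (insert y (insert z Q))" "separates x {y} (insert z Q)"
  shows "\<exists>k. phi_inv d1 d2 = Some k \<and> in_quadrant k x (insert z Q)"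
proof -
  have y_along: "separates_along d1 y {z} Q"
    using beyond_separates_along[of d1 y "{z}" Q] assms by simp
  have x_along: "separates_along d2 x {y} (insert z Q)"
    using beyond_separates_along[of d2 x "{y}" "insert z Q"] assms by (simp add: insert_commute)
  have perpendicular: "phi_inv d1 d2 \<noteq> None"
  proof
    assume "phi_inv d1 d2 = None"
    then have "separates_along d1 x {y} (insert z Q)"
      using separates_along_parallel assms(1,2) x_along by metis
    then show False
      using separates_along_nested_False y_along \<open>Q \<noteq> {}\<close> by blast
  qed
  then obtain k where k: "phi_inv d1 d2 = Some k" by blast
  have "beyond d1 x (insert z Q)"
    using separates_along_beyond[OF perpendicular x_along assms(4)] .
  moreover have "beyond d2 x (insert z Q)"
    using beyond_subset assms(6) by blast
  ultimately show ?thesis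
    using k in_quadrant_phi_inv by blast
qed

lemma quadrant_of_quadrant_and_side:
  assumes "is_numeral k" "is_direction d" "in_quadrant k y {z}"
    and "beyond d x {y, z}" "separates x {y} {z}"
  shows "\<exists>A B k'. varphi k d = Some (A, B, d) \<and> phi_inv B d = Some k' \<and> in_quadrant k' x {z}"
proof -
  obtain A B where AB: "varphi k d = Some (A, B, d)" "phi_inv B d \<noteq> None"
    "\<And>x S. in_quadrant k x S \<Longrightarrow> beyond B x S"
    using varphi_middle_side assms(1,2) by blast
  have "separates_along d x {y} {z}"
    using beyond_separates_along[of d x "{y}" "{z}"] assms by (simp add: insert_commute)
  then have "beyond B x {z}"
    using separates_along_beyond AB(2,3) assms(3) by blast
  moreover have "beyond d x {z}"
    using beyond_subset assms(4) by blast
  ultimately show ?thesis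
    using AB(1,2) in_quadrant_phi_inv by blast
qed

lemma letter_encodes_direction:
  assumes "letter_encodes d ps i" "is_direction d"
  shows "beyond d (ps!i) (set (take i ps)) \<and> separates (ps!i) {ps!(i-1)} (set (take (i-1) ps))"
  using assms by (cases d) (auto simp: letter_encodes_def Let_def)

lemma letter_encodes_numeral:
  assumes "letter_encodes k ps i" "is_numeral k"
  shows "in_quadrant k (ps!i) (set (take i ps))"
  using assms by (cases k) (auto simp: letter_encodes_def Let_def)

lemma set_take_Suc: "i < length xs \<Longrightarrow> set (take (Suc i) xs) = insert (xs!i) (set (take i xs))"
  by (simp add: take_Suc_conv_app_nth)

lemma letter_encodes_two_directions:
  assumes "letter_encodes d1 ps (Suc m)" "letter_encodes d2 ps (Suc (Suc m))"
    and "is_direction d1" "is_direction d2" "0 < m" "Suc (Suc m) < length ps"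
  shows "\<exists>k. phi_inv d1 d2 = Some k \<and> in_quadrant k (ps ! Suc (Suc m)) (set (take (Suc m) ps))"
proof -
  have earlier: "set (take m ps) \<noteq> {}"
    using assms(5,6) by (auto simp: take_eq_Nil)
  have take_Suc: "set (take (Suc m) ps) = insert (ps!m) (set (take m ps))"
    using set_take_Suc[of m ps] assms(6) by simp
  have take_Suc_Suc: "set (take (Suc (Suc m)) ps) = insert (ps ! Suc m) (set (take (Suc m) ps))"
    using set_take_Suc[of "Suc m" ps] assms(6) by simp
  have "beyond d1 (ps ! Suc m) (insert (ps!m) (set (take m ps)))"
    "separates (ps ! Suc m) {ps!m} (set (take m ps))"
    using letter_encodes_direction[OF assms(1,3)] take_Suc by simp_all
  moreover have "beyond d2 (ps ! Suc (Suc m)) (insert (ps ! Suc m) (insert (ps!m) (set (take m ps))))"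
    "separates (ps ! Suc (Suc m)) {ps ! Suc m} (insert (ps!m) (set (take m ps)))"
    using letter_encodes_direction[OF assms(2,4)] take_Suc take_Suc_Suc by simp_all
  ultimately show ?thesis
    using quadrant_of_two_sides[OF assms(3,4) earlier] take_Suc by simp
qed

lemma letter_encodes_numeral_direction:
  assumes "letter_encodes k ps 1" "letter_encodes d ps 2"
    and "is_numeral k" "is_direction d" "2 < length ps"
  shows "\<exists>A B k'. varphi k d = Some (A, B, d) \<and> phi_inv B d = Some k' \<and> in_quadrant k' (ps!2) {ps!0}"
proof -
  have take_1: "set (take 1 ps) = {ps!0}"
    using assms(5) by (cases ps) auto
  have take_2: "set (take 2 ps) = {ps!1, ps!0}"
    using set_take_Suc[of 1 ps] take_1 assms(5) by (simp add: numeral_2_eq_2)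
  have "in_quadrant k (ps!1) {ps!0}"
    using letter_encodes_numeral[OF assms(1,3)] take_1 by simp
  moreover have "beyond d (ps!2) {ps!1, ps!0}" "separates (ps!2) {ps!1} {ps!0}"
    using letter_encodes_direction[OF assms(2,4)] take_1 take_2 by simp_all
  ultimately show ?thesis
    using quadrant_of_quadrant_and_side[OF assms(3,4)] by blast
qed

lemma encodes_letter_encodes:
  "encodes w ps \<Longrightarrow> j < length w \<Longrightarrow> letter_encodes (w!j) ps (Suc j)"
  by (simp add: encodes_def)

theorem lemma6:
  fixes w :: "letter list" and ps :: "pin list"
  assumes "strict_pin_word w"
    and "encodes w ps"
  shows "\<forall>i. 2 \<le> i \<and> i \<le> length w \<longrightarrow>
           (\<exists>k. q w i = Some k \<and> is_numeral k \<and>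
                in_quadrant k (ps!i) (set (take (i-1) ps)))"
proof (intro allI impI)
  fix i assume i: "2 \<le> i \<and> i \<le> length w"
  then obtain m where m: "i = Suc (Suc m)" "Suc m < length w"
    by (metis Suc_le_lessD add_2_eq_Suc le_Suc_ex)
  have len: "length ps = length w + 1" using assms(2) by (simp add: encodes_def)
  have direction: "is_direction (w ! Suc m)"
    using assms(1) m(2) by (simp add: strict_pin_word_def)
  have encoded: "letter_encodes (w!m) ps (Suc m)" "letter_encodes (w ! Suc m) ps (Suc (Suc m))"
    using encodes_letter_encodes[OF assms(2)] m(2) by simp_all
  show "\<exists>k. q w i = Some k \<and> is_numeral k \<and> in_quadrant k (ps!i) (set (take (i-1) ps))"
  proof (cases m)
    case 0
    have "is_numeral (w!0)" using assms(1) by (simp add: strict_pin_word_def)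
    moreover have "letter_encodes (w!0) ps 1" "letter_encodes (w!1) ps 2"
      using encoded 0 by (simp_all add: numeral_2_eq_2)
    ultimately obtain A B k where "varphi (w!0) (w!1) = Some (A, B, w!1)"
      "phi_inv B (w!1) = Some k" "in_quadrant k (ps!2) {ps!0}"
      using letter_encodes_numeral_direction direction 0 m len by fastforce
    then show ?thesis
      using 0 m len by (cases ps) (auto simp: q_def numeral_2_eq_2 intro: phi_inv_is_numeral)
  next
    case (Suc _)
    then have "is_direction (w!m)" using assms(1) m(2) by (simp add: strict_pin_word_def)
    from letter_encodes_two_directions[OF encoded this direction] Suc m len
    show ?thesis
      by (auto simp: q_def intro: phi_inv_is_numeral)
  qed
qed

end
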